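(* Let $h_1$ and $h_2$ be hybrid path-sums such that the sum $a h_1 \boxplus h_2$ is defined, and let $a$ be a constructible real number. Then $\xi(a h_1 \boxplus h_2) = a\,\xi(h_1) + \xi(h_2)$ (as functions of histories). Moreover, whenever $h_1 \otimes h_2$ is defined, $\xi(h_1 \otimes h_2) = \xi(h_1)\otimes \xi(h_2)$, i.e. $\xi(h_1\otimes h_2)(\eta_1\otimes\eta_2)=\xi(h_1)(\eta_1)\otimes\xi(h_2)(\eta_2)$ for all histories $\eta_1$ of $h_1$ and $\eta_2$ of $h_2$.
   Context: Hybrid path-sums (HPS). Fix Boolean input variables $x_i$ and Boolean path variables $y_j$. An HPS is $h=\langle P, o, s\rangle_{su}$ where: $su$ (the support) is a finite set of path variables, and only input variables and variables of $su$ occur in $P,o,s$; the output $o=(o_{Qu},o_{Cl})$ consists of a quantum memory $o_{Qu}$, a finite map from quantum addresses to Boolean polynomials (over $\mathbb F_2$) in the $x_i,y_j$, and a classical memory $o_{Cl}$, a stack (list) of finite partial maps from classical addresses to Boolean polynomials in the $x_i,y_j$ recording the values of the classical memory at successive time steps (the top entry is the current value; the height of the stack is the age of $h$); the phase $P$ is a polynomial in the $x_i,y_j$ with dyadic rational coefficients; the scalar $s$ is a constructible-real-valued expression in the $x_i,y_j$. A history $\eta$ is a full Boolean instantiation of a classical memory stack. For fixed values of the inputs, the vector map of $h$ is $\xi(h)(\eta)=\sum_{\vec y\in\{0,1\}^{su},\ o_{Cl}(\vec y)=\eta} s(\vec y)\,e^{2\pi i P(\vec y)}\,|o_{Qu}(\vec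 y)\rangle$, a vector in the Hilbert space spanned by computational basis states of the quantum addresses. Sum: for $h_1=\langle P_1,o_1,s_1\rangle_{su_1}$, $h_2=\langle P_2,o_2,s_2\rangle_{su_2}$ with the same addresses and age, and $r$ a constructible real, $r h_1\boxplus h_2:=\langle P,o,s\rangle_{su_1\cup su_2\cup\{y_f\}}$ with $y_f$ a fresh path variable, where (using Boolean selection on $y_f$) for $y_f=0$: $P=P_1$, $o=o_1$, $s=r\,s_1\prod_{y\in su_2\setminus su_1}y$; for $y_f=1$: $P=P_2$, $o=o_2$, $s=s_2\prod_{y\in su_1\setminus su_2}y$. Tensor: if $su_1\cap su_2=\emptyset$ and the quantum addresses and the classical (address, time) cells of $o_1,o_2$ are disjoint, $h_1\otimes h_2:=\langle P_1+P_2, o_1\cup o_2, s_1 s_2\rangle_{su_1\cup su_2}$; the combined history of $\eta_1,\eta_2$ is written $\eta_1\otimes\eta_2$. *)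

theory Defs
  imports Complex_Main
begin

inductive constructible :: "real \<Rightarrow> bool" where
  rat: "constructible (of_rat q)"
| add: "constructible a \<Longrightarrow> constructible b \<Longrightarrow> constructible (a + b)"
| neg: "constructible a \<Longrightarrow> constructible (- a)"
| mult: "constructible a \<Longrightarrow> constructible b \<Longrightarrow> constructible (a * b)"
| inv: "constructible a \<Longrightarrow> constructible (inverse a)"
| sqrt: "constructible a \<Longrightarrow> a \<ge> 0 \<Longrightarrow> constructible (sqrt a)"

definition dyadic :: "real \<Rightarrow> bool" where
  "dyadic r \<longleftrightarrow> (\<exists>(k::int) (n::nat). r = of_int k / 2 ^ n)"

text \<open>Input variables are named by 'i, path variables by 'v, quantum addresses by 'q,
  classical addresses by 'c.  Every polynomial / expression is represented by its
  evaluation function on Boolean valuations of the input and path variables.\<close>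

type_synonym ('i,'v,'a) expr = "('i \<Rightarrow> bool) \<Rightarrow> ('v \<Rightarrow> bool) \<Rightarrow> 'a"

record ('i,'v,'q,'c) hps =
  supp :: "'v set"
  phase :: "('i,'v,real) expr"
  qmem :: "'q \<rightharpoonup> ('i,'v,bool) expr"
  cmem :: "('c \<rightharpoonup> ('i,'v,bool) expr) list"
  scal :: "('i,'v,real) expr"

definition depends_only :: "'v set \<Rightarrow> ('i,'v,'a) expr \<Rightarrow> bool" where
  "depends_only S f \<longleftrightarrow> (\<forall>x y y'. (\<forall>v\<in>S. y v = y' v) \<longrightarrow> f x y = f x y')"

definition wf_hps :: "('i,'v,'q,'c) hps \<Rightarrow> bool" where
  "wf_hps h \<longleftrightarrow>
     finite (supp h) \<and> finite (dom (qmem h)) \<and> (\<forall>m\<in>set (cmem h). finite (dom m))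
   \<and> depends_only (supp h) (phase h) \<and> depends_only (supp h) (scal h)
   \<and> (\<forall>q p. qmem h q = Some p \<longrightarrow> depends_only (supp h) p)
   \<and> (\<forall>m\<in>set (cmem h). \<forall>c p. m c = Some p \<longrightarrow> depends_only (supp h) p)
   \<and> (\<forall>x y. dyadic (phase h x y)) \<and> (\<forall>x y. constructible (scal h x y))"

definition assignments :: "'v set \<Rightarrow> ('v \<Rightarrow> bool) set" where
  "assignments S = {y. \<forall>v. v \<notin> S \<longrightarrow> \<not> y v}"

text \<open>Basis states: maps from quantum addresses to bool, False outside the address set.\<close>
definition eval_qu :: "('i,'v,'q,'c) hps \<Rightarrow> ('i \<Rightarrow> bool) \<Rightarrow> ('v \<Rightarrow> bool) \<Rightarrow> ('q \<Rightarrow> bool)" where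
  "eval_qu h x y = (\<lambda>q. case qmem h q of Some p \<Rightarrow> p x y | None \<Rightarrow> False)"

definition eval_cl :: "('i,'v,'q,'c) hps \<Rightarrow> ('i \<Rightarrow> bool) \<Rightarrow> ('v \<Rightarrow> bool) \<Rightarrow> ('c \<rightharpoonup> bool) list" where
  "eval_cl h x y = map (\<lambda>m c. map_option (\<lambda>p. p x y) (m c)) (cmem h)"

definition is_history :: "('i,'v,'q,'c) hps \<Rightarrow> ('c \<rightharpoonup> bool) list \<Rightarrow> bool" where
  "is_history h \<eta> \<longleftrightarrow> list_all2 (\<lambda>m e. dom e = dom m) (cmem h) \<eta>"

text \<open>The vector map xi(h)(eta), as a vector (coefficient function) over basis states.\<close>
definition xi :: "('i,'v,'q,'c) hps \<Rightarrow> ('i \<Rightarrow> bool) \<Rightarrow> ('c \<rightharpoonup> bool) list \<Rightarrow> ('q \<Rightarrow> bool) \<Rightarrow> complex" where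
  "xi h x \<eta> = (\<lambda>b. \<Sum>y\<in>{y\<in>assignments (supp h). eval_cl h x y = \<eta>}.
       complex_of_real (scal h x y) * exp (2 * pi * \<i> * complex_of_real (phase h x y))
       * (if eval_qu h x y = b then 1 else 0))"

definition sum_defined :: "('i,'v,'q,'c) hps \<Rightarrow> ('i,'v,'q,'c) hps \<Rightarrow> 'v \<Rightarrow> bool" where
  "sum_defined h1 h2 yf \<longleftrightarrow> dom (qmem h1) = dom (qmem h2)
     \<and> map dom (cmem h1) = map dom (cmem h2)
     \<and> yf \<notin> supp h1 \<union> supp h2"

definition sel :: "'v \<Rightarrow> ('i,'v,'a) expr \<Rightarrow> ('i,'v,'a) expr \<Rightarrow> ('i,'v,'a) expr" where
  "sel yf f0 f1 = (\<lambda>x y. if y yf then f1 x y else f0 x y)"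

definition sel_opt :: "'v \<Rightarrow> ('i,'v,'a) expr option \<Rightarrow> ('i,'v,'a) expr option \<Rightarrow> ('i,'v,'a) expr option" where
  "sel_opt yf a b = (case (a, b) of (Some p0, Some p1) \<Rightarrow> Some (sel yf p0 p1) | _ \<Rightarrow> None)"

definition prod_vars :: "'v set \<Rightarrow> ('i,'v,real) expr" where
  "prod_vars S = (\<lambda>x y. \<Prod>v\<in>S. if y v then 1 else 0)"

definition hsum :: "real \<Rightarrow> ('i,'v,'q,'c) hps \<Rightarrow> ('i,'v,'q,'c) hps \<Rightarrow> 'v \<Rightarrow> ('i,'v,'q,'c) hps" where
  "hsum r h1 h2 yf = \<lparr> supp = supp h1 \<union> supp h2 \<union> {yf},
     phase = sel yf (phase h1) (phase h2),
     qmem = (\<lambda>q. sel_opt yf (qmem h1 q) (qmem h2 q)),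
     cmem = map2 (\<lambda>m1 m2 c. sel_opt yf (m1 c) (m2 c)) (cmem h1) (cmem h2),
     scal = sel yf (\<lambda>x y. r * scal h1 x y * prod_vars (supp h2 - supp h1) x y)
                   (\<lambda>x y. scal h2 x y * prod_vars (supp h1 - supp h2) x y) \<rparr>"

definition tensor_defined :: "('i,'v,'q,'c) hps \<Rightarrow> ('i,'v,'q,'c) hps \<Rightarrow> bool" where
  "tensor_defined h1 h2 \<longleftrightarrow> supp h1 \<inter> supp h2 = {}
     \<and> dom (qmem h1) \<inter> dom (qmem h2) = {}
     \<and> length (cmem h1) = length (cmem h2)
     \<and> (\<forall>i < length (cmem h1). dom (cmem h1 ! i) \<inter> dom (cmem h2 ! i) = {})"

definition htensor :: "('i,'v,'q,'c) hps \<Rightarrow> ('i,'v,'q,'c) hps \<Rightarrow> ('i,'v,'q,'c) hps" where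
  "htensor h1 h2 = \<lparr> supp = supp h1 \<union> supp h2,
     phase = (\<lambda>x y. phase h1 x y + phase h2 x y),
     qmem = qmem h1 ++ qmem h2,
     cmem = map2 (++) (cmem h1) (cmem h2),
     scal = (\<lambda>x y. scal h1 x y * scal h2 x y) \<rparr>"

definition hist_tensor :: "('c \<rightharpoonup> bool) list \<Rightarrow> ('c \<rightharpoonup> bool) list \<Rightarrow> ('c \<rightharpoonup> bool) list" where
  "hist_tensor \<eta>1 \<eta>2 = map2 (++) \<eta>1 \<eta>2"

definition vtensor :: "'q set \<Rightarrow> 'q set \<Rightarrow> (('q \<Rightarrow> bool) \<Rightarrow> complex) \<Rightarrow> (('q \<Rightarrow> bool) \<Rightarrow> complex) \<Rightarrow> ('q \<Rightarrow> bool) \<Rightarrow> complex" where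
  "vtensor Q1 Q2 v1 v2 = (\<lambda>b. if (\<forall>q. b q \<longrightarrow> q \<in> Q1 \<union> Q2)
       then v1 (\<lambda>q. q \<in> Q1 \<and> b q) * v2 (\<lambda>q. q \<in> Q2 \<and> b q) else 0)"

end

theory Submission
  imports Defs
begin

text \<open>The vector map is a finite sum over the Boolean assignments of the support.
  For \<open>a h\<^sub>1 \<boxplus> h\<^sub>2\<close>, split this sum on the fresh variable \<open>y\<^sub>f\<close>. On the half
  \<open>y\<^sub>f = 0\<close> every term is \<open>a\<close> times a term of \<open>h\<^sub>1\<close> times the product of the variables
  of \<open>su\<^sub>2 - su\<^sub>1\<close>; that factor keeps exactly one extension of each assignment of
  \<open>su\<^sub>1\<close>, so this half sums to \<open>a \<xi>(h\<^sub>1)\<close>, and symmetrically the half \<open>y\<^sub>f = 1\<close> gives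
  \<open>\<xi>(h\<^sub>2)\<close>.
  For \<open>h\<^sub>1 \<otimes> h\<^sub>2\<close>, assignments of the disjoint union of the supports are pairs of
  assignments, and each term factors: phases add, scalars multiply, and because the
  addresses are disjoint, a history or basis state of the tensor is produced exactly when
  its two restrictions are produced by \<open>h\<^sub>1\<close> and \<open>h\<^sub>2\<close>. So the double sum is the product.\<close>

lemma finite_assignments: "finite S \<Longrightarrow> finite (assignments S)"
proof -
  assume "finite S"
  moreover have "assignments S \<subseteq> (\<lambda>T v. v \<in> T) ` Pow S"
  proof
    fix y assume "y \<in> assignments S"
    then have "y = (\<lambda>v. v \<in> {v\<in>S. y v})" by (auto simp: assignments_def)
    then show "y \<in> (\<lambda>T v. v \<in> T) ` Pow S" by blast
  qed
  ultimately show ?thesis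
    by (meson finite_Pow_iff finite_imageI finite_subset)
qed

lemma sum_assignments_insert:
  assumes "finite S" "z \<notin> S"
  shows "sum f (assignments (insert z S))
       = sum f (assignments S) + (\<Sum>y\<in>assignments S. f (y(z := True)))"
proof -
  let ?A = "assignments (insert z S)"
  have "sum f ?A = sum f (?A \<inter> {y. \<not> y z}) + sum f (?A - {y. \<not> y z})"
    using assms(1) by (simp add: finite_assignments sum.Int_Diff)
  also have "?A \<inter> {y. \<not> y z} = assignments S"
    using assms(2) by (auto simp: assignments_def)
  also have "sum f (?A - {y. \<not> y z}) = (\<Sum>y\<in>assignments S. f (y(z := True)))"
    using assms(2)
    by (intro sum.reindex_bij_witness[of _ "\<lambda>y. y(z := True)" "\<lambda>y. y(z := False)"])
      (auto simp: assignments_def fun_eq_iff fun_upd_idem)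
  finally show ?thesis .
qed

lemma sum_assignments_pad:
  assumes "finite S" "T \<subseteq> S" and f: "\<And>y y'. \<forall>v\<in>T. y v = y' v \<Longrightarrow> f y = f y'"
  shows "(\<Sum>y\<in>assignments S. if \<forall>v\<in>S - T. y v then f y else 0) = (\<Sum>y\<in>assignments T. f y)"
proof -
  have "(\<Sum>y\<in>assignments S. if \<forall>v\<in>S - T. y v then f y else 0)
      = sum f {y\<in>assignments S. \<forall>v\<in>S - T. y v}"
    using assms(1) by (simp add: finite_assignments sum.inter_filter)
  also have "\<dots> = (\<Sum>y\<in>assignments T. f y)"
    using assms(2)
    by (intro sum.reindex_bij_witness[of _ "\<lambda>y v. y v \<or> v \<in> S - T" "\<lambda>y v. v \<in> T \<and> y v"])
      (auto simp: assignments_def fun_eq_iff intro: f)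
  finally show ?thesis .
qed

lemma sum_assignments_Un:
  assumes "finite S1" "finite S2" "S1 \<inter> S2 = {}"
  shows "sum f (assignments (S1 \<union> S2))
       = (\<Sum>y1\<in>assignments S1. \<Sum>y2\<in>assignments S2. f (\<lambda>v. y1 v \<or> y2 v))"
proof -
  have "(\<Sum>y1\<in>assignments S1. \<Sum>y2\<in>assignments S2. f (\<lambda>v. y1 v \<or> y2 v))
      = (\<Sum>(y1, y2)\<in>assignments S1 \<times> assignments S2. f (\<lambda>v. y1 v \<or> y2 v))"
    by (rule sum.cartesian_product)
  also have "\<dots> = sum f (assignments (S1 \<union> S2))"
    using assms(3)
    by (intro sum.reindex_bij_witness[of _ "\<lambda>y. (\<lambda>v. v \<in> S1 \<and> y v, \<lambda>v. v \<in> S2 \<and> y v)"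
          "\<lambda>(y1, y2) v. y1 v \<or> y2 v"])
      (auto simp: assignments_def fun_eq_iff)
  finally show ?thesis by simp
qed

definition xi_summand ::
    "('i,'v,'q,'c) hps \<Rightarrow> ('i \<Rightarrow> bool) \<Rightarrow> ('c \<rightharpoonup> bool) list \<Rightarrow> ('q \<Rightarrow> bool) \<Rightarrow> ('v \<Rightarrow> bool) \<Rightarrow> complex"
  where
  "xi_summand h x \<eta> b y = (if eval_cl h x y = \<eta> then
     complex_of_real (scal h x y) * exp (2 * pi * \<i> * complex_of_real (phase h x y))
       * (if eval_qu h x y = b then 1 else 0) else 0)"

lemma xi_conv_sum:
  "finite (supp h) \<Longrightarrow> xi h x \<eta> b = (\<Sum>y\<in>assignments (supp h). xi_summand h x \<eta> b y)"
  \<comment> \<open>in \<open>xi_def\<close> the coercion is inserted as \<open>complex_of_real (2 * pi)\<close>\<close>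
  unfolding xi_def xi_summand_def of_real_mult of_real_numeral
  by (simp add: finite_assignments sum.inter_filter)

lemma depends_onlyD: "depends_only S f \<Longrightarrow> \<forall>v\<in>S. y v = y' v \<Longrightarrow> f x y = f x y'"
  unfolding depends_only_def by blast

lemma eval_cl_cong:
  assumes "wf_hps h" "\<forall>v\<in>supp h. y v = y' v"
  shows "eval_cl h x y = eval_cl h x y'"
proof -
  have "\<forall>m\<in>set (cmem h). \<forall>c p. m c = Some p \<longrightarrow> p x y = p x y'"
    using assms unfolding wf_hps_def depends_only_def by blast
  then show ?thesis
    unfolding eval_cl_def map_eq_conv fun_eq_iff by (auto intro: option.map_cong0)
qed

lemma eval_qu_cong:
  assumes "wf_hps h" "\<forall>v\<in>supp h. y v = y' v"
  shows "eval_qu h x y = eval_qu h x y'"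
proof -
  have "\<forall>q p. qmem h q = Some p \<longrightarrow> p x y = p x y'"
    using assms unfolding wf_hps_def depends_only_def by blast
  then show ?thesis
    unfolding eval_qu_def fun_eq_iff by (simp split: option.split)
qed

lemma xi_summand_cong:
  assumes "wf_hps h" "\<forall>v\<in>supp h. y v = y' v"
  shows "xi_summand h x \<eta> b y = xi_summand h x \<eta> b y'"
proof -
  have "scal h x y = scal h x y'" "phase h x y = phase h x y'"
    using assms depends_onlyD[of "supp h" "scal h"] depends_onlyD[of "supp h" "phase h"]
    by (auto simp: wf_hps_def)
  then show ?thesis
    unfolding xi_summand_def using eval_cl_cong[OF assms] eval_qu_cong[OF assms] by simp
qed

lemma prod_vars_eq: "finite T \<Longrightarrow> prod_vars T x y = (if \<forall>v\<in>T. y v then 1 else 0)"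
  unfolding prod_vars_def by (induction T rule: finite_induct) auto

lemma map_option_sel_opt:
  "(p0 = None \<longleftrightarrow> p1 = None) \<Longrightarrow> map_option (\<lambda>p. p x y) (sel_opt yf p0 p1)
     = (if y yf then map_option (\<lambda>p. p x y) p1 else map_option (\<lambda>p. p x y) p0)"
  by (cases p0; cases p1) (auto simp: sel_opt_def sel_def)

lemma eval_cl_hsum:
  assumes "map dom (cmem h1) = map dom (cmem h2)"
  shows "eval_cl (hsum a h1 h2 yf) x y = (if y yf then eval_cl h2 x y else eval_cl h1 x y)"
proof -
  have len: "length (cmem h1) = length (cmem h2)"
    using assms by (rule map_eq_imp_length_eq)
  have "(cmem h1 ! i) c = None \<longleftrightarrow> (cmem h2 ! i) c = None" if "i < length (cmem h1)" for i c
  proof -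
    have "dom (cmem h1 ! i) = dom (cmem h2 ! i)"
      using arg_cong[OF assms, of "\<lambda>l. l ! i"] that len by simp
    then show ?thesis by (metis domIff)
  qed
  with len show ?thesis
    unfolding eval_cl_def hsum_def
    by (simp add: list_eq_iff_nth_eq fun_eq_iff map_option_sel_opt)
qed

lemma eval_qu_hsum:
  assumes "dom (qmem h1) = dom (qmem h2)"
  shows "eval_qu (hsum a h1 h2 yf) x y = (if y yf then eval_qu h2 x y else eval_qu h1 x y)"
proof
  fix q
  have "qmem h1 q = None \<longleftrightarrow> qmem h2 q = None"
    using assms by (metis domIff)
  then show "eval_qu (hsum a h1 h2 yf) x y q = (if y yf then eval_qu h2 x y else eval_qu h1 x y) q"
    unfolding eval_qu_def hsum_def
    by (cases "qmem h1 q"; cases "qmem h2 q") (auto simp: sel_opt_def sel_def)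
qed

lemma xi_summand_hsum:
  assumes "sum_defined h1 h2 yf"
  shows "xi_summand (hsum a h1 h2 yf) x \<eta> b y =
    (if y yf then complex_of_real (prod_vars (supp h1 - supp h2) x y) * xi_summand h2 x \<eta> b y
     else complex_of_real a * complex_of_real (prod_vars (supp h2 - supp h1) x y) * xi_summand h1 x \<eta> b y)"
  using assms unfolding sum_defined_def xi_summand_def
  by (simp add: eval_cl_hsum eval_qu_hsum) (simp add: hsum_def sel_def)

lemma xi_hsum:
  assumes w1: "wf_hps h1" and w2: "wf_hps h2" and sd: "sum_defined h1 h2 yf"
  shows "xi (hsum a h1 h2 yf) x \<eta> b = complex_of_real a * xi h1 x \<eta> b + xi h2 x \<eta> b"
proof -
  let ?S1 = "supp h1" and ?S2 = "supp h2"
  let ?S = "?S1 \<union> ?S2"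
  let ?f = "xi_summand (hsum a h1 h2 yf) x \<eta> b"
  have fin: "finite ?S1" "finite ?S2" using w1 w2 by (auto simp: wf_hps_def)
  have yf: "yf \<notin> ?S" using sd by (simp add: sum_defined_def)
  have diff: "?S - ?S1 = ?S2 - ?S1" "?S - ?S2 = ?S1 - ?S2" by auto
  have "xi (hsum a h1 h2 yf) x \<eta> b = sum ?f (assignments (insert yf ?S))"
    using fin by (simp add: xi_conv_sum hsum_def)
  also have "\<dots> = sum ?f (assignments ?S) + (\<Sum>y\<in>assignments ?S. ?f (y(yf := True)))"
    using fin yf by (simp add: sum_assignments_insert)
  also have "sum ?f (assignments ?S) = complex_of_real a *
      (\<Sum>y\<in>assignments ?S. if \<forall>v\<in>?S - ?S1. y v then xi_summand h1 x \<eta> b y else 0)"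
    unfolding sum_distrib_left
  proof (rule sum.cong[OF refl])
    fix y assume "y \<in> assignments ?S"
    then have "\<not> y yf" using yf by (simp add: assignments_def)
    then show "?f y = complex_of_real a *
        (if \<forall>v\<in>?S - ?S1. y v then xi_summand h1 x \<eta> b y else 0)"
      using fin by (simp add: xi_summand_hsum[OF sd] prod_vars_eq diff)
  qed
  also have "\<dots> = complex_of_real a * xi h1 x \<eta> b"
    using fin by (simp add: sum_assignments_pad xi_summand_cong[OF w1] xi_conv_sum)
  also have "(\<Sum>y\<in>assignments ?S. ?f (y(yf := True))) =
      (\<Sum>y\<in>assignments ?S. if \<forall>v\<in>?S - ?S2. y v then xi_summand h2 x \<eta> b y else 0)"
  proof (rule sum.cong[OF refl])
    fix y
    have "\<forall>v\<in>?S2. (y(yf := True)) v = y v" using yf by auto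
    then show "?f (y(yf := True)) =
        (if \<forall>v\<in>?S - ?S2. y v then xi_summand h2 x \<eta> b y else 0)"
      using fin yf by (auto simp: xi_summand_hsum[OF sd] prod_vars_eq xi_summand_cong[OF w2] diff)
  qed
  also have "\<dots> = xi h2 x \<eta> b"
    using fin by (simp add: sum_assignments_pad xi_summand_cong[OF w2] xi_conv_sum)
  finally show ?thesis .
qed

lemma map_add_eq_map_add_iff:
  assumes "dom a1 = dom b1" "dom a2 = dom b2" "dom a1 \<inter> dom a2 = {}"
  shows "a1 ++ a2 = b1 ++ b2 \<longleftrightarrow> a1 = b1 \<and> a2 = b2"
proof
  assume eq: "a1 ++ a2 = b1 ++ b2"
  have "a1 c = b1 c \<and> a2 c = b2 c" for c
  proof (cases "c \<in> dom a2")
    case True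
    then have "a1 c = None" "b1 c = None" "c \<in> dom b2"
      using assms by (auto simp: domIff)
    with True show ?thesis
      using fun_cong[OF eq, of c] by (auto simp: map_add_def split: option.splits)
  next
    case False
    then have "a2 c = None" "b2 c = None"
      using assms by (auto simp: domIff)
    then show ?thesis
      using fun_cong[OF eq, of c] by (simp add: map_add_def)
  qed
  then show "a1 = b1 \<and> a2 = b2" by (simp add: fun_eq_iff)
qed simp

lemma hist_tensor_eq_iff:
  assumes "list_all2 (\<lambda>m e. dom e = dom m) l1 k1" "list_all2 (\<lambda>m e. dom e = dom m) l2 k2"
    and "list_all2 (\<lambda>m1 m2. dom m1 \<inter> dom m2 = {}) l1 l2"
  shows "hist_tensor l1 l2 = hist_tensor k1 k2 \<longleftrightarrow> l1 = k1 \<and> l2 = k2"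
  using assms unfolding hist_tensor_def
  by (auto simp: list_eq_iff_nth_eq list_all2_conv_all_nth map_add_eq_map_add_iff)

lemma eval_cl_htensor:
  assumes "length (cmem h1) = length (cmem h2)"
  shows "eval_cl (htensor h1 h2) x y = hist_tensor (eval_cl h1 x y) (eval_cl h2 x y)"
  using assms unfolding eval_cl_def htensor_def hist_tensor_def
  by (simp add: list_eq_iff_nth_eq fun_eq_iff map_add_def split: option.split)

lemma disjoint_union_fun_eq_iff:
  assumes "Q1 \<inter> Q2 = {}" "\<And>q. e1 q \<Longrightarrow> q \<in> Q1" "\<And>q. e2 q \<Longrightarrow> q \<in> Q2"
  shows "(\<lambda>q. e1 q \<or> e2 q) = b \<longleftrightarrow>
    (\<forall>q. b q \<longrightarrow> q \<in> Q1 \<union> Q2) \<and> e1 = (\<lambda>q. q \<in> Q1 \<and> b q) \<and> e2 = (\<lambda>q. q \<in> Q2 \<and> b q)"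
proof
  assume "(\<lambda>q. e1 q \<or> e2 q) = b"
  then have "b q \<longleftrightarrow> e1 q \<or> e2 q" for q by auto
  with assms show "(\<forall>q. b q \<longrightarrow> q \<in> Q1 \<union> Q2) \<and> e1 = (\<lambda>q. q \<in> Q1 \<and> b q) \<and> e2 = (\<lambda>q. q \<in> Q2 \<and> b q)"
    unfolding fun_eq_iff by blast
qed (use assms(1) in \<open>auto simp: fun_eq_iff\<close>)

lemma eval_qu_in_dom: "eval_qu h x y q \<Longrightarrow> q \<in> dom (qmem h)"
  unfolding eval_qu_def by (auto split: option.splits)

lemma eval_qu_htensor:
  assumes "dom (qmem h1) \<inter> dom (qmem h2) = {}"
  shows "eval_qu (htensor h1 h2) x y = (\<lambda>q. eval_qu h1 x y q \<or> eval_qu h2 x y q)"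
  using assms unfolding eval_qu_def htensor_def
  by (auto simp: fun_eq_iff map_add_def domIff split: option.split)

lemma eval_qu_htensor_eq_iff:
  assumes "dom (qmem h1) \<inter> dom (qmem h2) = {}"
  shows "eval_qu (htensor h1 h2) x y = b \<longleftrightarrow>
    (\<forall>q. b q \<longrightarrow> q \<in> dom (qmem h1) \<union> dom (qmem h2))
    \<and> eval_qu h1 x y = (\<lambda>q. q \<in> dom (qmem h1) \<and> b q)
    \<and> eval_qu h2 x y = (\<lambda>q. q \<in> dom (qmem h2) \<and> b q)"
  unfolding eval_qu_htensor[OF assms]
  by (rule disjoint_union_fun_eq_iff[OF assms eval_qu_in_dom eval_qu_in_dom])

lemma length_eval_cl [simp]: "length (eval_cl h x y) = length (cmem h)"
  by (simp add: eval_cl_def)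

lemma dom_eval_cl: "i < length (cmem h) \<Longrightarrow> dom (eval_cl h x y ! i) = dom (cmem h ! i)"
  unfolding eval_cl_def by (auto simp: dom_def)

lemma xi_summand_htensor:
  assumes td: "tensor_defined h1 h2" and "is_history h1 \<eta>1" "is_history h2 \<eta>2"
  defines "Q1 \<equiv> dom (qmem h1)" and "Q2 \<equiv> dom (qmem h2)"
  shows "xi_summand (htensor h1 h2) x (hist_tensor \<eta>1 \<eta>2) b y =
    (if \<forall>q. b q \<longrightarrow> q \<in> Q1 \<union> Q2
     then xi_summand h1 x \<eta>1 (\<lambda>q. q \<in> Q1 \<and> b q) y * xi_summand h2 x \<eta>2 (\<lambda>q. q \<in> Q2 \<and> b q) y
     else 0)"
proof -
  have len: "length (cmem h1) = length (cmem h2)" and dQ: "Q1 \<inter> Q2 = {}"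
    using td by (auto simp: tensor_defined_def Q1_def Q2_def)
  have "eval_cl (htensor h1 h2) x y = hist_tensor \<eta>1 \<eta>2 \<longleftrightarrow>
      eval_cl h1 x y = \<eta>1 \<and> eval_cl h2 x y = \<eta>2"
    unfolding eval_cl_htensor[OF len]
  proof (rule hist_tensor_eq_iff)
    show "list_all2 (\<lambda>m e. dom e = dom m) (eval_cl h1 x y) \<eta>1"
      using assms(2) by (simp add: is_history_def list_all2_conv_all_nth dom_eval_cl)
    show "list_all2 (\<lambda>m e. dom e = dom m) (eval_cl h2 x y) \<eta>2"
      using assms(3) by (simp add: is_history_def list_all2_conv_all_nth dom_eval_cl)
    show "list_all2 (\<lambda>m1 m2. dom m1 \<inter> dom m2 = {}) (eval_cl h1 x y) (eval_cl h2 x y)"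
      using td by (simp add: tensor_defined_def list_all2_conv_all_nth dom_eval_cl)
  qed
  moreover have "exp (2 * pi * \<i> * complex_of_real (phase h1 x y + phase h2 x y)) =
      exp (2 * pi * \<i> * complex_of_real (phase h1 x y)) * exp (2 * pi * \<i> * complex_of_real (phase h2 x y))"
    by (simp add: distrib_left exp_add)
  ultimately show ?thesis
    unfolding xi_summand_def eval_qu_htensor_eq_iff[OF dQ[unfolded Q1_def Q2_def]] Q1_def Q2_def
    by (auto simp: htensor_def)
qed

lemma xi_htensor:
  assumes w1: "wf_hps h1" and w2: "wf_hps h2" and td: "tensor_defined h1 h2"
    and hist: "is_history h1 \<eta>1" "is_history h2 \<eta>2"
  shows "xi (htensor h1 h2) x (hist_tensor \<eta>1 \<eta>2) b
       = vtensor (dom (qmem h1)) (dom (qmem h2)) (xi h1 x \<eta>1) (xi h2 x \<eta>2) b"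
proof -
  let ?S1 = "supp h1" and ?S2 = "supp h2"
  define ok where "ok = (\<forall>q. b q \<longrightarrow> q \<in> dom (qmem h1) \<union> dom (qmem h2))"
  define g1 where "g1 = xi_summand h1 x \<eta>1 (\<lambda>q. q \<in> dom (qmem h1) \<and> b q)"
  define g2 where "g2 = xi_summand h2 x \<eta>2 (\<lambda>q. q \<in> dom (qmem h2) \<and> b q)"
  have fin: "finite ?S1" "finite ?S2" using w1 w2 by (auto simp: wf_hps_def)
  have dS: "?S1 \<inter> ?S2 = {}" using td by (simp add: tensor_defined_def)
  have "xi (htensor h1 h2) x (hist_tensor \<eta>1 \<eta>2) b
      = (\<Sum>y\<in>assignments (?S1 \<union> ?S2). xi_summand (htensor h1 h2) x (hist_tensor \<eta>1 \<eta>2) b y)"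
    using fin by (simp add: xi_conv_sum htensor_def)
  also have "\<dots> = (\<Sum>y1\<in>assignments ?S1. \<Sum>y2\<in>assignments ?S2.
      xi_summand (htensor h1 h2) x (hist_tensor \<eta>1 \<eta>2) b (\<lambda>v. y1 v \<or> y2 v))"
    using fin dS by (rule sum_assignments_Un)
  also have "\<dots> = (\<Sum>y1\<in>assignments ?S1. \<Sum>y2\<in>assignments ?S2. if ok then g1 y1 * g2 y2 else 0)"
  proof (intro sum.cong refl)
    fix y1 y2 assume "y1 \<in> assignments ?S1" "y2 \<in> assignments ?S2"
    then have "\<forall>v\<in>?S1. (y1 v \<or> y2 v) = y1 v" "\<forall>v\<in>?S2. (y1 v \<or> y2 v) = y2 v"
      using dS by (auto simp: assignments_def)
    then show "xi_summand (htensor h1 h2) x (hist_tensor \<eta>1 \<eta>2) b (\<lambda>v. y1 v \<or> y2 v)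
        = (if ok then g1 y1 * g2 y2 else 0)"
      unfolding xi_summand_htensor[OF td hist] ok_def g1_def g2_def
      by (simp only: xi_summand_cong[OF w1] xi_summand_cong[OF w2] Un_iff)
  qed
  also have "\<dots> = (if ok then xi h1 x \<eta>1 (\<lambda>q. q \<in> dom (qmem h1) \<and> b q)
      * xi h2 x \<eta>2 (\<lambda>q. q \<in> dom (qmem h2) \<and> b q) else 0)"
    using fin by (simp add: xi_conv_sum g1_def g2_def sum_product)
  also have "\<dots> = vtensor (dom (qmem h1)) (dom (qmem h2)) (xi h1 x \<eta>1) (xi h2 x \<eta>2) b"
    by (simp add: vtensor_def ok_def)
  finally show ?thesis .
qed

theorem mainTheorem1:
  fixes h1 h2 :: "('i,'v,'q,'c) hps" and a :: real and yf :: 'v and x :: "'i \<Rightarrow> bool"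
  assumes "wf_hps h1" and "wf_hps h2"
  shows "(constructible a \<and> sum_defined h1 h2 yf \<longrightarrow>
            xi (hsum a h1 h2 yf) x = (\<lambda>\<eta> b. complex_of_real a * xi h1 x \<eta> b + xi h2 x \<eta> b))
       \<and> (tensor_defined h1 h2 \<longrightarrow>
            (\<forall>\<eta>1 \<eta>2. is_history h1 \<eta>1 \<and> is_history h2 \<eta>2 \<longrightarrow>
               xi (htensor h1 h2) x (hist_tensor \<eta>1 \<eta>2)
               = vtensor (dom (qmem h1)) (dom (qmem h2)) (xi h1 x \<eta>1) (xi h2 x \<eta>2)))"
  using xi_hsum[OF assms] xi_htensor[OF assms] by (auto simp: fun_eq_iff)

end
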